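(* Let $A$ be an $\mathbb{R}$-algebra which is an integral domain whose fraction field is real, and let $B$ be an $A$-algebra (with structure morphism $\iota:A\to B$) which has the substitution property over $A$. Then $\iota:A\to B$ is injective.
   Context: A field $F$ is real if $-1$ is not a sum of squares in $F$ (equivalently $(0)$ is a real ideal of $F$: $a_1^2+\cdots+a_k^2=0$ implies all $a_i=0$). Substitution property: $B$ has the substitution property over $A$ if for every real closed field $R$ and every ring homomorphism $\phi:A\to R$ there exists one and only one ring homomorphism $\psi:B\to R$ with $\psi\circ\iota=\phi$. *)

theory Defs
  imports Complex_Main "HOL-Computational_Algebra.Fraction_Field" "HOL-Algebra.Ring"
begin

definition real_field_type :: "'k::field itself \<Rightarrow> bool" where
  "real_field_type TYPE('k) \<longleftrightarrow>
     \<not> (\<exists>(n::nat) (f::nat \<Rightarrow> 'k). (\<Sum>i<n. f i ^ 2) = - 1)"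

definition tc_ring_hom :: "('a::comm_ring_1 \<Rightarrow> 'b::comm_ring_1) \<Rightarrow> bool" where
  "tc_ring_hom f \<longleftrightarrow> f 1 = 1 \<and> (\<forall>x y. f (x + y) = f x + f y) \<and> (\<forall>x y. f (x * y) = f x * f y)"

definition ring_hom_into :: "('a::comm_ring_1 \<Rightarrow> 'r) \<Rightarrow> ('r, 'm) ring_scheme \<Rightarrow> bool" where
  "ring_hom_into f R \<longleftrightarrow> (\<forall>x. f x \<in> carrier R) \<and> f 1 = \<one>\<^bsub>R\<^esub>
     \<and> (\<forall>x y. f (x + y) = f x \<oplus>\<^bsub>R\<^esub> f y) \<and> (\<forall>x y. f (x * y) = f x \<otimes>\<^bsub>R\<^esub> f y)"

definition real_field :: "('r, 'm) ring_scheme \<Rightarrow> bool" where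
  "real_field R \<longleftrightarrow> field R \<and>
     \<not> (\<exists>(n::nat) f. f ` {..<n} \<subseteq> carrier R \<and>
          finsum R (\<lambda>i. f i \<otimes>\<^bsub>R\<^esub> f i) {..<n} = \<ominus>\<^bsub>R\<^esub> \<one>\<^bsub>R\<^esub>)"

definition real_closed_field :: "('r, 'm) ring_scheme \<Rightarrow> bool" where
  "real_closed_field R \<longleftrightarrow> real_field R \<and>
     (\<forall>a\<in>carrier R. \<exists>b\<in>carrier R. a = b \<otimes>\<^bsub>R\<^esub> b \<or> \<ominus>\<^bsub>R\<^esub> a = b \<otimes>\<^bsub>R\<^esub> b) \<and>
     (\<forall>(n::nat) c. odd n \<longrightarrow> c ` {..n} \<subseteq> carrier R \<longrightarrow> c n \<noteq> \<zero>\<^bsub>R\<^esub> \<longrightarrow>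
        (\<exists>x\<in>carrier R. finsum R (\<lambda>i. c i \<otimes>\<^bsub>R\<^esub> x [^]\<^bsub>R\<^esub> i) {..n} = \<zero>\<^bsub>R\<^esub>))"

definition substitution_property ::
  "'r itself \<Rightarrow> ('a::comm_ring_1 \<Rightarrow> 'b::comm_ring_1) \<Rightarrow> bool" where
  "substitution_property TYPE('r) \<iota> \<longleftrightarrow>
     (\<forall>R :: 'r ring. real_closed_field R \<longrightarrow>
        (\<forall>\<phi> :: 'a \<Rightarrow> 'r. ring_hom_into \<phi> R \<longrightarrow>
           (\<exists>!\<psi> :: 'b \<Rightarrow> 'r. ring_hom_into \<psi> R \<and> \<psi> \<circ> \<iota> = \<phi>)))"

end

theory Submission
  imports Defs "HOL-Algebra.Algebraic_Closure_Type" "HOL-Algebra.Weak_Morphisms"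
begin

(* Since Frac A is real, Zorn's lemma gives a maximal formally real subfield R of the algebraic
   closure of Frac A containing Frac A, and maximality makes R real closed. For alpha outside R,
   -1 is a sum of squares in R(alpha), i.e. -1 = G(alpha) for a sum G of squares of polynomials
   over R of degree below that of the minimal polynomial mu of alpha. Then mu divides 1 + G,
   which has even degree and a sum of squares as leading coefficient. For alpha a square root
   of a non-square x this exhibits -x as a sum of squares in R; for mu of odd degree the cofactor
   has smaller odd degree, and a root of it in R would make -1 a sum of squares in R.
   As A is infinite, the algebraic closure of Frac A injects into A, so R can be transported to
   a real closed field with carrier in A. The substitution property factors the embedding
   A -> R through the structure map, which is therefore injective. *)

section \<open>Subfields and sums of squares\<close>

definition is_subfield :: "'c::field set \<Rightarrow> bool" where
  "is_subfield R \<longleftrightarrow> 0 \<in> R \<and> 1 \<in> R \<and> (\<forall>x\<in>R. \<forall>y\<in>R. x + y \<in> R \<and> x * y \<in> R)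
     \<and> (\<forall>x\<in>R. - x \<in> R \<and> inverse x \<in> R)"

lemma
  assumes "is_subfield R"
  shows is_subfield_0: "0 \<in> R"
    and is_subfield_1: "1 \<in> R"
    and is_subfield_add: "x \<in> R \<Longrightarrow> y \<in> R \<Longrightarrow> x + y \<in> R"
    and is_subfield_mult: "x \<in> R \<Longrightarrow> y \<in> R \<Longrightarrow> x * y \<in> R"
    and is_subfield_uminus: "x \<in> R \<Longrightarrow> - x \<in> R"
    and is_subfield_inverse: "x \<in> R \<Longrightarrow> inverse x \<in> R"
  using assms unfolding is_subfield_def by blast+

lemma is_subfield_diff: "is_subfield R \<Longrightarrow> x \<in> R \<Longrightarrow> y \<in> R \<Longrightarrow> x - y \<in> R"
  by (metis diff_conv_add_uminus is_subfield_add is_subfield_uminus)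

lemma is_subfield_divide: "is_subfield R \<Longrightarrow> x \<in> R \<Longrightarrow> y \<in> R \<Longrightarrow> x / y \<in> R"
  by (metis divide_inverse is_subfield_inverse is_subfield_mult)

lemma is_subfield_sum: "is_subfield R \<Longrightarrow> (\<And>i. i \<in> A \<Longrightarrow> f i \<in> R) \<Longrightarrow> sum f A \<in> R"
  by (induction A rule: infinite_finite_induct) (simp_all add: is_subfield_0 is_subfield_add)

lemma is_subfield_power: "is_subfield R \<Longrightarrow> x \<in> R \<Longrightarrow> x ^ n \<in> R"
  by (induction n) (simp_all add: is_subfield_1 is_subfield_mult)

lemma tc_ring_hom_0: "tc_ring_hom f \<Longrightarrow> f 0 = 0"
  unfolding tc_ring_hom_def by (metis add_0 add_cancel_right_right)

lemma tc_ring_hom_uminus: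
  assumes "tc_ring_hom f"
  shows "f (- x) = - f x"
proof -
  have "f (- x) + f x = 0"
    using assms tc_ring_hom_0[OF assms] unfolding tc_ring_hom_def by (metis add.left_inverse)
  then show ?thesis by (simp add: eq_neg_iff_add_eq_0)
qed

inductive_set sums_of_squares :: "'c::comm_ring_1 set \<Rightarrow> 'c set" for S where
  zero: "0 \<in> sums_of_squares S"
| add_square: "a \<in> S \<Longrightarrow> s \<in> sums_of_squares S \<Longrightarrow> a * a + s \<in> sums_of_squares S"

lemma square_in_sums_of_squares: "a \<in> S \<Longrightarrow> a * a \<in> sums_of_squares S"
  using sums_of_squares.add_square[OF _ sums_of_squares.zero] by fastforce

lemma sums_of_squares_add:
  "s \<in> sums_of_squares S \<Longrightarrow> t \<in> sums_of_squares S \<Longrightarrow> s + t \<in> sums_of_squares S"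
  by (induction rule: sums_of_squares.induct) (simp_all add: add.assoc sums_of_squares.add_square)

lemma sums_of_squares_mono:
  assumes "S \<subseteq> T"
  shows "sums_of_squares S \<subseteq> sums_of_squares T"
proof
  fix s assume "s \<in> sums_of_squares S"
  then show "s \<in> sums_of_squares T"
    using assms by (induction rule: sums_of_squares.induct) (auto intro: sums_of_squares.intros)
qed

lemma sum_squares_in_sums_of_squares:
  "(\<And>i. i < n \<Longrightarrow> f i \<in> S) \<Longrightarrow> (\<Sum>i<(n::nat). f i * f i) \<in> sums_of_squares S"
  by (induction n)
    (simp_all add: sums_of_squares.zero sums_of_squares_add square_in_sums_of_squares)

lemma sums_of_squares_image:
  assumes "tc_ring_hom f"
  shows "sums_of_squares (f ` S) = f ` sums_of_squares S"
proof (intro equalityI subsetI)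
  fix s assume "s \<in> sums_of_squares (f ` S)"
  then show "s \<in> f ` sums_of_squares S"
  proof (induction rule: sums_of_squares.induct)
    case zero
    show ?case using tc_ring_hom_0[OF assms] sums_of_squares.zero by (metis image_eqI)
  next
    case (add_square a s)
    then obtain b t where "a = f b" "b \<in> S" "s = f t" "t \<in> sums_of_squares S" by blast
    then have "a * a + s = f (b * b + t)" "b * b + t \<in> sums_of_squares S"
      using assms sums_of_squares.add_square unfolding tc_ring_hom_def by auto
    then show ?case by blast
  qed
next
  fix s assume "s \<in> f ` sums_of_squares S"
  then obtain t where "s = f t" "t \<in> sums_of_squares S" by blast
  from this(2) show "s \<in> sums_of_squares (f ` S)" unfolding \<open>s = f t\<close>
  proof (induction rule: sums_of_squares.induct)
    case zero
    show ?case using tc_ring_hom_0[OF assms] sums_of_squares.zero by metis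
  next
    case (add_square a t)
    then show ?case
      using assms sums_of_squares.add_square[of "f a"] unfolding tc_ring_hom_def by simp
  qed
qed

lemma sums_of_squares_subset:
  assumes "is_subfield R"
  shows "sums_of_squares R \<subseteq> R"
proof
  fix s assume "s \<in> sums_of_squares R"
  then show "s \<in> R"
    using assms by (induction rule: sums_of_squares.induct)
      (simp_all add: is_subfield_0 is_subfield_add is_subfield_mult)
qed

lemma sums_of_squares_mult_square:
  assumes "is_subfield R" "a \<in> R"
  shows "t \<in> sums_of_squares R \<Longrightarrow> a * a * t \<in> sums_of_squares R"
proof (induction rule: sums_of_squares.induct)
  case zero
  show ?case by (simp add: sums_of_squares.zero)
next
  case (add_square b s)
  have "a * a * (b * b + s) = (a * b) * (a * b) + a * a * s" by (simp add: algebra_simps)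
  then show ?case
    using add_square assms sums_of_squares.add_square is_subfield_mult by metis
qed

lemma sums_of_squares_mult:
  assumes "is_subfield R" "t \<in> sums_of_squares R"
  shows "s \<in> sums_of_squares R \<Longrightarrow> s * t \<in> sums_of_squares R"
proof (induction rule: sums_of_squares.induct)
  case zero
  show ?case by (simp add: sums_of_squares.zero)
next
  case (add_square a s)
  have "(a * a + s) * t = a * a * t + s * t" by (simp add: algebra_simps)
  then show ?case
    using add_square assms sums_of_squares_mult_square sums_of_squares_add by metis
qed

lemma sums_of_squares_inverse:
  assumes R: "is_subfield R" and s: "s \<in> sums_of_squares R"
  shows "inverse s \<in> sums_of_squares R"
proof (cases "s = 0")
  case True
  then show ?thesis using s by simp
next
  case False
  have "inverse s = inverse s * inverse s * s" using False by (simp add: field_simps)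
  moreover have "inverse s \<in> R" using R s sums_of_squares_subset is_subfield_inverse by blast
  ultimately show ?thesis using sums_of_squares_mult_square[OF R _ s] by metis
qed

definition formally_real :: "'c::comm_ring_1 set \<Rightarrow> bool" where
  "formally_real S \<longleftrightarrow> - 1 \<notin> sums_of_squares S"

lemma sums_of_squares_add_neq_0:
  assumes R: "is_subfield R" "formally_real R"
    and s: "s \<in> sums_of_squares R" "s \<noteq> 0" and t: "t \<in> sums_of_squares R"
  shows "s + t \<noteq> 0"
proof
  assume "s + t = 0"
  then have "- 1 = t * inverse s" using s(2) by (simp add: add_eq_0_iff)
  also have "\<dots> \<in> sums_of_squares R"
    using sums_of_squares_mult[OF R(1) sums_of_squares_inverse[OF R(1) s(1)] t] .
  finally show False using R(2) unfolding formally_real_def by simp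
qed

lemma formally_real_UNIV:
  assumes "real_field_type TYPE('k::field)"
  shows "formally_real (UNIV :: 'k set)"
proof -
  have "\<exists>n f. s = (\<Sum>i<(n::nat). f i ^ 2)" if "s \<in> sums_of_squares (UNIV :: 'k set)" for s
    using that
  proof (induction rule: sums_of_squares.induct)
    case zero
    show ?case by (intro exI[of _ 0]) simp
  next
    case (add_square a s)
    then obtain n f where "s = (\<Sum>i<(n::nat). f i ^ 2)" by blast
    then have "a * a + s = (\<Sum>i<Suc n. (f(n := a)) i ^ 2)" by (simp add: power2_eq_square)
    then show ?case by blast
  qed
  then show ?thesis using assms unfolding formally_real_def real_field_type_def by metis
qed

lemma formally_real_range:
  assumes "tc_ring_hom f" "inj f" "formally_real (UNIV :: 'a::comm_ring_1 set)"
  shows "formally_real (range (f :: 'a \<Rightarrow> 'b::comm_ring_1))"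
proof -
  have "- 1 \<notin> f ` sums_of_squares UNIV"
    using assms tc_ring_hom_uminus[OF assms(1), of 1] unfolding formally_real_def tc_ring_hom_def
    by (metis image_iff inj_eq)
  then show ?thesis unfolding formally_real_def sums_of_squares_image[OF assms(1)] .
qed

section \<open>Maximal formally real subfields\<close>

definition maximal_real_subfield :: "'c::field set \<Rightarrow> 'c set \<Rightarrow> bool" where
  "maximal_real_subfield K R \<longleftrightarrow> is_subfield R \<and> K \<subseteq> R \<and> formally_real R \<and>
     (\<forall>S. is_subfield S \<longrightarrow> R \<subset> S \<longrightarrow> \<not> formally_real S)"

lemma maximal_real_subfieldD:
  assumes "maximal_real_subfield K R"
  shows "is_subfield R" "formally_real R" "K \<subseteq> R"
  using assms unfolding maximal_real_subfield_def by blast+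

lemma sums_of_squares_Union_chain:
  assumes "s \<in> sums_of_squares (\<Union>C)" "C \<noteq> {}" "subset.chain UNIV C"
  shows "\<exists>M\<in>C. s \<in> sums_of_squares M"
  using assms
proof (induction rule: sums_of_squares.induct)
  case zero
  then show ?case using sums_of_squares.zero by blast
next
  case (add_square a s)
  then obtain M N where M: "M \<in> C" "a \<in> M" and N: "N \<in> C" "s \<in> sums_of_squares N"
    by blast
  have "M \<subseteq> N \<or> N \<subseteq> M" using add_square.prems(2) M(1) N(1) unfolding subset.chain_def by blast
  then show ?case
  proof
    assume "M \<subseteq> N"
    then show ?thesis using M N sums_of_squares.add_square by blast
  next
    assume "N \<subseteq> M"
    then have "s \<in> sums_of_squares M" using N(2) sums_of_squares_mono by blast
    then show ?thesis using M sums_of_squares.add_square by blast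
  qed
qed

lemma is_subfield_Union_chain:
  assumes "C \<noteq> {}" "subset.chain UNIV C" "\<And>M. M \<in> C \<Longrightarrow> is_subfield M"
  shows "is_subfield (\<Union>C)"
  unfolding is_subfield_def
proof (intro conjI ballI)
  show "0 \<in> \<Union>C" "1 \<in> \<Union>C" using assms(1,3) is_subfield_0 is_subfield_1 by blast+
  fix x assume "x \<in> \<Union>C"
  then obtain M where M: "M \<in> C" "x \<in> M" by blast
  then show "- x \<in> \<Union>C" "inverse x \<in> \<Union>C"
    using assms(3) is_subfield_uminus is_subfield_inverse by blast+
  fix y assume "y \<in> \<Union>C"
  then obtain N where N: "N \<in> C" "y \<in> N" by blast
  have "M \<subseteq> N \<or> N \<subseteq> M" using assms(2) M(1) N(1) unfolding subset.chain_def by blast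
  then obtain L where "L \<in> C" "x \<in> L" "y \<in> L" using M N by blast
  then show "x + y \<in> \<Union>C" "x * y \<in> \<Union>C"
    using assms(3)[of L] is_subfield_add is_subfield_mult by blast+
qed

lemma maximal_real_subfield_exists:
  assumes "is_subfield K" "formally_real K"
  shows "\<exists>R. maximal_real_subfield K R"
proof -
  define \<R> where "\<R> = {R. is_subfield R \<and> K \<subseteq> R \<and> formally_real R}"
  have "\<exists>R\<in>\<R>. \<forall>S\<in>\<R>. R \<subseteq> S \<longrightarrow> S = R"
  proof (rule subset_Zorn_nonempty)
    show "\<R> \<noteq> {}" using assms unfolding \<R>_def by blast
  next
    fix C assume C: "C \<noteq> {}" "subset.chain \<R> C"
    then have chain: "subset.chain UNIV C" and C\<R>: "C \<subseteq> \<R>"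
      by (simp_all add: subset.chain_def)
    have "is_subfield (\<Union>C)"
      using is_subfield_Union_chain[OF C(1) chain] C\<R> unfolding \<R>_def by blast
    moreover have "K \<subseteq> \<Union>C" using C(1) C\<R> unfolding \<R>_def by blast
    moreover have "formally_real (\<Union>C)"
      unfolding formally_real_def
    proof
      assume "- 1 \<in> sums_of_squares (\<Union>C)"
      then obtain M where "M \<in> C" "- 1 \<in> sums_of_squares M"
        using sums_of_squares_Union_chain[OF _ C(1) chain] by blast
      then show False using C\<R> unfolding \<R>_def formally_real_def by blast
    qed
    ultimately show "\<Union>C \<in> \<R>" unfolding \<R>_def by blast
  qed
  then obtain R where R: "R \<in> \<R>" and max: "\<And>S. S \<in> \<R> \<Longrightarrow> R \<subseteq> S \<Longrightarrow> S = R" by blast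
  have "\<not> formally_real S" if "is_subfield S" "R \<subset> S" for S
    using that R max[of S] unfolding \<R>_def by blast
  then show ?thesis using R unfolding maximal_real_subfield_def \<R>_def by blast
qed

section \<open>Polynomials over a subfield and simple extensions\<close>

definition poly_over :: "'c::comm_ring_1 set \<Rightarrow> 'c poly \<Rightarrow> bool" where
  "poly_over R p \<longleftrightarrow> (\<forall>i. coeff p i \<in> R)"

lemma degree_pos_if_root:
  assumes "p \<noteq> 0" "poly p \<alpha> = 0"
  shows "0 < degree p"
proof (rule ccontr)
  assume "\<not> 0 < degree p"
  then obtain c where "p = [:c:]" using degree_eq_zeroE by blast
  then show False using assms by simp
qed

lemma poly_degree_le_2:
  fixes p :: "'a::comm_semiring_1 poly"
  assumes "degree p \<le> 2"
  shows "poly p x = coeff p 0 + coeff p 1 * x + coeff p 2 * x ^ 2"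
proof -
  have "poly p x = poly (\<Sum>i\<le>2. monom (coeff p i) i) x"
    using poly_as_sum_of_monoms'[OF assms] by simp
  also have "\<dots> = coeff p 0 + coeff p 1 * x + coeff p 2 * x ^ 2"
    by (simp add: poly_sum poly_monom eval_nat_numeral)
  finally show ?thesis .
qed

definition min_poly_over :: "'c::field set \<Rightarrow> 'c \<Rightarrow> 'c poly \<Rightarrow> bool" where
  "min_poly_over R \<alpha> \<mu> \<longleftrightarrow> poly_over R \<mu> \<and> \<mu> \<noteq> 0 \<and> poly \<mu> \<alpha> = 0 \<and>
     (\<forall>q. poly_over R q \<and> q \<noteq> 0 \<and> poly q \<alpha> = 0 \<longrightarrow> degree \<mu> \<le> degree q)"

lemma min_poly_over_exists:
  assumes "poly_over R p" "p \<noteq> 0" "poly p \<alpha> = 0"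
  shows "\<exists>\<mu>. min_poly_over R \<alpha> \<mu>"
  using ex_has_least_nat[of "\<lambda>q. poly_over R q \<and> q \<noteq> 0 \<and> poly q \<alpha> = 0" p degree] assms
  unfolding min_poly_over_def by blast

lemma min_poly_overD:
  assumes "min_poly_over R \<alpha> \<mu>"
  shows "poly_over R \<mu>" "\<mu> \<noteq> 0" "poly \<mu> \<alpha> = 0"
    and "poly_over R q \<Longrightarrow> q \<noteq> 0 \<Longrightarrow> poly q \<alpha> = 0 \<Longrightarrow> degree \<mu> \<le> degree q"
  using assms unfolding min_poly_over_def by blast+

definition simple_extension :: "'c::field set \<Rightarrow> 'c \<Rightarrow> 'c set" where
  "simple_extension R \<alpha> = (\<lambda>h. poly h \<alpha>) ` {h. poly_over R h}"

lemma simple_extensionI: "poly_over R h \<Longrightarrow> poly h \<alpha> = z \<Longrightarrow> z \<in> simple_extension R \<alpha>"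
  unfolding simple_extension_def by blast

lemma tc_ring_hom_poly: "tc_ring_hom (\<lambda>p. poly p x)"
  by (simp add: tc_ring_hom_def)

lemma poly_sums_of_squares_in:
  assumes "G \<in> sums_of_squares H" "\<And>h. h \<in> H \<Longrightarrow> poly h x \<in> R"
  shows "poly G x \<in> sums_of_squares R"
proof -
  have "poly G x \<in> sums_of_squares ((\<lambda>h. poly h x) ` H)"
    using assms(1) sums_of_squares_image[OF tc_ring_hom_poly] by blast
  also have "\<dots> \<subseteq> sums_of_squares R" using assms(2) by (intro sums_of_squares_mono) blast
  finally show ?thesis .
qed

context
  fixes R :: "'c::field set"
  assumes R: "is_subfield R"
begin

lemma poly_over_const: "c \<in> R \<Longrightarrow> poly_over R [:c:]"
  unfolding poly_over_def using is_subfield_0[OF R] by (simp add: coeff_pCons split: nat.split)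

lemma poly_over_0: "poly_over R 0"
  using poly_over_const[OF is_subfield_0[OF R]] by simp

lemma poly_over_1: "poly_over R 1"
  using poly_over_const[OF is_subfield_1[OF R]] by (simp add: one_pCons)

lemma poly_over_monom: "c \<in> R \<Longrightarrow> poly_over R (monom c n)"
  unfolding poly_over_def using is_subfield_0[OF R] by (simp add: coeff_monom)

lemma poly_over_add: "poly_over R p \<Longrightarrow> poly_over R q \<Longrightarrow> poly_over R (p + q)"
  unfolding poly_over_def using is_subfield_add[OF R] by simp

lemma poly_over_uminus: "poly_over R p \<Longrightarrow> poly_over R (- p)"
  unfolding poly_over_def using is_subfield_uminus[OF R] by simp

lemma poly_over_diff: "poly_over R p \<Longrightarrow> poly_over R q \<Longrightarrow> poly_over R (p - q)"
  unfolding poly_over_def using is_subfield_diff[OF R] by simp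

lemma poly_over_smult: "c \<in> R \<Longrightarrow> poly_over R p \<Longrightarrow> poly_over R (smult c p)"
  unfolding poly_over_def using is_subfield_mult[OF R] by simp

lemma poly_over_mult: "poly_over R p \<Longrightarrow> poly_over R q \<Longrightarrow> poly_over R (p * q)"
  unfolding poly_over_def coeff_mult
  by (intro allI is_subfield_sum[OF R]) (simp add: is_subfield_mult[OF R])

lemma poly_over_poly: "poly_over R p \<Longrightarrow> x \<in> R \<Longrightarrow> poly p x \<in> R"
  unfolding poly_altdef poly_over_def
  by (intro is_subfield_sum[OF R]) (simp add: is_subfield_mult[OF R] is_subfield_power[OF R])

lemma poly_over_pseudo_divmod_main:
  "lc \<in> R \<Longrightarrow> poly_over R d \<Longrightarrow> poly_over R q \<Longrightarrow> poly_over R r \<Longrightarrow>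
    pseudo_divmod_main lc q r d dr n = (q', r') \<Longrightarrow> poly_over R q' \<and> poly_over R r'"
proof (induction lc q r d dr n rule: pseudo_divmod_main.induct)
  case (1 lc q r d dr n)
  let ?q = "smult lc q + monom (coeff r dr) n" and ?r = "smult lc r - monom (coeff r dr) n * d"
  have "coeff r dr \<in> R" using "1.prems"(4) unfolding poly_over_def by blast
  then have "poly_over R ?q" "poly_over R ?r"
    using "1.prems"(1-4) by (simp_all add: poly_over_add poly_over_smult poly_over_monom
        poly_over_diff poly_over_mult)
  moreover have "pseudo_divmod_main lc ?q ?r d (dr - 1) n = (q', r')"
    using "1.prems"(5) by (simp add: Let_def)
  ultimately show ?case using "1.IH"[OF refl refl refl refl] "1.prems"(1,2) by blast
qed simp

lemma poly_over_div_mod: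
  assumes "poly_over R p" "poly_over R g"
  shows "poly_over R (p div g)" "poly_over R (p mod g)"
proof -
  have "poly_over R (p div g) \<and> poly_over R (p mod g)"
  proof (cases "g = 0")
    case True
    then show ?thesis using assms poly_over_0 by simp
  next
    case False
    define c where "c = inverse (lead_coeff g)"
    have c: "c \<in> R" unfolding c_def using assms(2) is_subfield_inverse[OF R] poly_over_def by blast
    let ?h = "smult c g"
    have "?h \<noteq> 0" using False unfolding c_def by simp
    have h: "poly_over R ?h" using poly_over_smult c assms(2) .
    then have lc: "lead_coeff ?h \<in> R" unfolding poly_over_def by blast
    obtain q r where qr: "pseudo_divmod p ?h = (q, r)" by fastforce
    then have "pseudo_divmod_main (lead_coeff ?h) 0 p ?h (degree p)
        (1 + length (coeffs p) - length (coeffs ?h)) = (q, r)"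
      using \<open>?h \<noteq> 0\<close> unfolding pseudo_divmod_def by simp
    then have "poly_over R q \<and> poly_over R r"
      using poly_over_pseudo_divmod_main[OF lc h poly_over_0 assms(1)] by blast
    moreover have "p div g = smult c q" "p mod g = r"
      using pdivmod_via_pseudo_divmod[of p g] False qr unfolding c_def by (simp_all add: Let_def)
    ultimately show ?thesis using poly_over_smult c by simp
  qed
  then show "poly_over R (p div g)" "poly_over R (p mod g)" by blast+
qed


lemma min_poly_over_dvd:
  assumes \<mu>: "min_poly_over R \<alpha> \<mu>" and q: "poly_over R q" "poly q \<alpha> = 0"
  shows "q = (q div \<mu>) * \<mu>"
proof -
  note \<mu>R = min_poly_overD[OF \<mu>]
  have "q mod \<mu> = 0"
  proof (rule ccontr)
    assume "q mod \<mu> \<noteq> 0"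
    moreover have "poly_over R (q mod \<mu>)" using poly_over_div_mod(2)[OF q(1) \<mu>R(1)] .
    moreover have "poly (q mod \<mu>) \<alpha> = 0" using poly_mod[OF \<mu>R(3)] q(2) by simp
    ultimately have "degree \<mu> \<le> degree (q mod \<mu>)" using \<mu>R(4) by blast
    then show False using degree_mod_less'[OF \<mu>R(2) \<open>q mod \<mu> \<noteq> 0\<close>] by simp
  qed
  then show ?thesis by (metis add.right_neutral div_mult_mod_eq)
qed

lemma min_poly_over_inverse:
  assumes \<mu>: "min_poly_over R \<alpha> \<mu>"
  shows "poly_over R u \<Longrightarrow> poly u \<alpha> \<noteq> 0 \<Longrightarrow> degree u < degree \<mu> \<Longrightarrow>
    \<exists>v. poly_over R v \<and> poly u \<alpha> * poly v \<alpha> = 1"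
proof (induction "degree u" arbitrary: u rule: less_induct)
  case less
  note \<mu>R = min_poly_overD(1-3)[OF \<mu>] and minimal = min_poly_overD(4)[OF \<mu>]
  have "u \<noteq> 0" using less.prems(2) by auto
  show ?case
  proof (cases "degree u = 0")
    case True
    then obtain c where c: "u = [:c:]" by (metis degree_eq_zeroE)
    then have "c \<in> R" using less.prems(1) unfolding poly_over_def by (metis coeff_pCons_0)
    then have "poly_over R [:inverse c:]" using poly_over_const is_subfield_inverse[OF R] by blast
    moreover have "poly u \<alpha> * poly [:inverse c:] \<alpha> = 1" using c \<open>u \<noteq> 0\<close> by simp
    ultimately show ?thesis by blast
  next
    case False
    define q r where "q = \<mu> div u" and "r = \<mu> mod u"
    have qr: "poly_over R q" "poly_over R r"
      unfolding q_def r_def using poly_over_div_mod[OF \<mu>R(1) less.prems(1)] by blast+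
    have "poly \<mu> \<alpha> = poly q \<alpha> * poly u \<alpha> + poly r \<alpha>"
      unfolding q_def r_def by (metis div_mult_mod_eq poly_add poly_mult)
    then have r_at: "poly r \<alpha> = - (poly q \<alpha> * poly u \<alpha>)" using \<mu>R(3) by (metis add_eq_0_iff)
    have "r \<noteq> 0"
    proof
      assume "r = 0"
      then have "\<mu> = q * u" unfolding q_def r_def by (metis add.right_neutral div_mult_mod_eq)
      have "poly q \<alpha> = 0" using r_at \<open>r = 0\<close> less.prems(2) by simp
      have "q \<noteq> 0" using \<open>\<mu> = q * u\<close> \<mu>R(2) by auto
      then have "degree \<mu> = degree q + degree u"
        using \<open>\<mu> = q * u\<close> \<open>u \<noteq> 0\<close> by (simp add: degree_mult_eq)
      then show False using minimal[OF qr(1) \<open>q \<noteq> 0\<close> \<open>poly q \<alpha> = 0\<close>] False by simp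
    qed
    then have deg: "degree r < degree u"
      using degree_mod_less'[OF \<open>u \<noteq> 0\<close>] unfolding r_def by blast
    have "poly r \<alpha> \<noteq> 0"
    proof
      assume "poly r \<alpha> = 0"
      then show False using minimal[OF qr(2) \<open>r \<noteq> 0\<close>] deg less.prems(3) by simp
    qed
    then obtain v where v: "poly_over R v" "poly r \<alpha> * poly v \<alpha> = 1"
      using less.hyps[OF deg qr(2)] deg less.prems(3) by force
    have "poly_over R (- (q * v))"
      using poly_over_uminus[OF poly_over_mult[OF qr(1) v(1)]] .
    moreover have "poly u \<alpha> * poly (- (q * v)) \<alpha> = 1"
      using v(2) unfolding r_at by (simp add: algebra_simps)
    ultimately show ?thesis by blast
  qed
qed

lemma simple_extension_reduced:
  assumes P: "poly_over R P" "P \<noteq> 0" "poly P \<alpha> = 0"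
  shows "simple_extension R \<alpha> = (\<lambda>h. poly h \<alpha>) ` {h. poly_over R h \<and> degree h < degree P}"
proof (intro equalityI subsetI)
  fix z assume "z \<in> simple_extension R \<alpha>"
  then obtain h where h: "poly_over R h" "z = poly h \<alpha>" unfolding simple_extension_def by blast
  have "degree (h mod P) < degree P"
    using degree_mod_less'[OF P(2)] degree_pos_if_root[OF P(2,3)] by (cases "h mod P = 0") auto
  moreover have "poly_over R (h mod P)" using poly_over_div_mod(2)[OF h(1) P(1)] .
  moreover have "z = poly (h mod P) \<alpha>" using h(2) poly_mod[OF P(3)] by simp
  ultimately show "z \<in> (\<lambda>h. poly h \<alpha>) ` {h. poly_over R h \<and> degree h < degree P}" by blast
next
  fix z assume "z \<in> (\<lambda>h. poly h \<alpha>) ` {h. poly_over R h \<and> degree h < degree P}"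
  then show "z \<in> simple_extension R \<alpha>" unfolding simple_extension_def by blast
qed

lemma subset_simple_extension: "R \<subseteq> simple_extension R \<alpha>"
proof
  fix c assume "c \<in> R"
  show "c \<in> simple_extension R \<alpha>" using simple_extensionI[OF poly_over_const[OF \<open>c \<in> R\<close>]] by simp
qed

lemma in_simple_extension: "\<alpha> \<in> simple_extension R \<alpha>"
  using simple_extensionI[OF poly_over_monom[OF is_subfield_1[OF R], of 1]]
  by (simp add: poly_monom)

lemma is_subfield_simple_extension:
  assumes \<mu>: "min_poly_over R \<alpha> \<mu>"
  shows "is_subfield (simple_extension R \<alpha>)"
  unfolding is_subfield_def
proof (intro conjI ballI)
  show "0 \<in> simple_extension R \<alpha>" "1 \<in> simple_extension R \<alpha>"
    using subset_simple_extension is_subfield_0[OF R] is_subfield_1[OF R] by blast+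
  fix x assume "x \<in> simple_extension R \<alpha>"
  then obtain h where h: "poly_over R h" "x = poly h \<alpha>" unfolding simple_extension_def by blast
  show "- x \<in> simple_extension R \<alpha>"
    using simple_extensionI[OF poly_over_uminus[OF h(1)]] h(2) by simp
  show "inverse x \<in> simple_extension R \<alpha>"
  proof (cases "x = 0")
    case True
    then show ?thesis using \<open>0 \<in> simple_extension R \<alpha>\<close> by simp
  next
    case False
    note \<mu>R = min_poly_overD[OF \<mu>]
    have deg: "degree (h mod \<mu>) < degree \<mu>"
      using degree_mod_less'[OF \<mu>R(2)] degree_pos_if_root[OF \<mu>R(2,3)] by (cases "h mod \<mu> = 0") auto
    have over: "poly_over R (h mod \<mu>)" using poly_over_div_mod(2)[OF h(1) \<mu>R(1)] .
    have "poly (h mod \<mu>) \<alpha> = x" using h(2) poly_mod[OF \<mu>R(3)] by simp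
    then obtain v where v: "poly_over R v" "x * poly v \<alpha> = 1"
      using min_poly_over_inverse[OF \<mu> over _ deg] False by auto
    then show ?thesis using simple_extensionI[OF v(1)] inverse_unique[OF v(2)] by simp
  qed
  fix y assume "y \<in> simple_extension R \<alpha>"
  then obtain k where k: "poly_over R k" "y = poly k \<alpha>" unfolding simple_extension_def by blast
  show "x + y \<in> simple_extension R \<alpha>" "x * y \<in> simple_extension R \<alpha>"
    using simple_extensionI[OF poly_over_add[OF h(1) k(1)]]
      simple_extensionI[OF poly_over_mult[OF h(1) k(1)]] h(2) k(2) by simp_all
qed

end

section \<open>Maximal formally real subfields are real closed\<close>

definition sos_leading_even :: "'c::comm_ring_1 set \<Rightarrow> 'c poly \<Rightarrow> bool" where
  "sos_leading_even R p \<longleftrightarrow> p \<noteq> 0 \<and> even (degree p) \<and> lead_coeff p \<in> sums_of_squares R"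

lemma sos_leading_even_add:
  assumes R: "is_subfield R" "formally_real R"
    and p: "sos_leading_even R p" and q: "sos_leading_even R q"
  shows "sos_leading_even R (p + q)" "degree (p + q) = max (degree p) (degree q)"
proof -
  have "sos_leading_even R (p + q) \<and> degree (p + q) = max (degree p) (degree q)"
  proof (cases "degree p" "degree q" rule: linorder_cases)
    case less
    then have "degree (p + q) = degree q" "lead_coeff (p + q) = lead_coeff q"
      by (simp_all add: degree_add_eq_right coeff_eq_0)
    then show ?thesis using less q unfolding sos_leading_even_def by auto
  next
    case greater
    then have "degree (p + q) = degree p" "lead_coeff (p + q) = lead_coeff p"
      by (simp_all add: degree_add_eq_left coeff_eq_0)
    then show ?thesis using greater p unfolding sos_leading_even_def by auto
  next
    case equal
    have sum: "coeff (p + q) (degree p) = lead_coeff p + lead_coeff q" using equal by simp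
    moreover have lead: "lead_coeff p + lead_coeff q \<noteq> 0"
      using sums_of_squares_add_neq_0[OF R] p q unfolding sos_leading_even_def by simp
    ultimately have "degree p \<le> degree (p + q)" by (metis le_degree)
    moreover have "degree (p + q) \<le> degree p" using equal degree_add_le by (metis order.refl)
    ultimately have deg: "degree (p + q) = degree p" by simp
    have "p + q \<noteq> 0" using sum lead by (metis coeff_0)
    moreover have "lead_coeff (p + q) \<in> sums_of_squares R"
      using sum deg sums_of_squares_add p q unfolding sos_leading_even_def by auto
    ultimately show ?thesis using deg equal p unfolding sos_leading_even_def by simp
  qed
  then show "sos_leading_even R (p + q)" "degree (p + q) = max (degree p) (degree q)" by blast+
qed

lemma sos_leading_even_square:
  fixes r :: "'c::idom poly"
  assumes "poly_over R r" "r \<noteq> 0"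
  shows "sos_leading_even R (r * r)" "degree (r * r) = 2 * degree r"
proof -
  have "lead_coeff r \<in> R" using assms(1) unfolding poly_over_def by blast
  then have "lead_coeff (r * r) \<in> sums_of_squares R"
    unfolding lead_coeff_mult by (rule square_in_sums_of_squares)
  then show "sos_leading_even R (r * r)" "degree (r * r) = 2 * degree r"
    using assms(2) unfolding sos_leading_even_def by (simp_all add: degree_mult_eq)
qed

lemma one_plus_sums_of_squares_poly:
  assumes R: "is_subfield R" "formally_real R"
    and G: "G \<in> sums_of_squares {h. poly_over R h \<and> degree h < m}"
  shows "poly_over R (1 + G)" "sos_leading_even R (1 + G)" "degree (1 + G) \<le> 2 * (m - 1)"
proof -
  from G have "poly_over R (1 + G) \<and> sos_leading_even R (1 + G) \<and> degree (1 + G) \<le> 2 * (m - 1)"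
  proof (induction rule: sums_of_squares.induct)
    case zero
    show ?case
      using poly_over_1[OF R(1)] square_in_sums_of_squares[OF is_subfield_1[OF R(1)]]
      unfolding sos_leading_even_def by simp
  next
    case (add_square r G)
    then have r: "poly_over R r" "degree r < m" and IH: "poly_over R (1 + G)"
      "sos_leading_even R (1 + G)" "degree (1 + G) \<le> 2 * (m - 1)" by blast+
    have eq: "1 + (r * r + G) = r * r + (1 + G)" by (simp add: algebra_simps)
    have "poly_over R (1 + (r * r + G))"
      unfolding eq using poly_over_add[OF R(1) poly_over_mult[OF R(1) r(1) r(1)] IH(1)] .
    moreover have "sos_leading_even R (1 + (r * r + G)) \<and> degree (1 + (r * r + G)) \<le> 2 * (m - 1)"
    proof (cases "r = 0")
      case True
      then show ?thesis using IH by simp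
    next
      case False
      note rr = sos_leading_even_square[OF r(1) False]
      show ?thesis
        unfolding eq using sos_leading_even_add[OF R rr(1) IH(2)] rr(2) r(2) IH(3) by simp
    qed
    ultimately show ?case by blast
  qed
  then show "poly_over R (1 + G)" "sos_leading_even R (1 + G)" "degree (1 + G) \<le> 2 * (m - 1)"
    by blast+
qed

lemma maximal_real_subfield_minus_one:
  assumes max: "maximal_real_subfield K R" and "\<alpha> \<notin> R"
    and P: "poly_over R P" "P \<noteq> 0" "poly P \<alpha> = 0"
  shows "\<exists>G\<in>sums_of_squares {h. poly_over R h \<and> degree h < degree P}. poly G \<alpha> = - 1"
proof -
  note R = maximal_real_subfieldD[OF max]
  obtain \<mu> where \<mu>: "min_poly_over R \<alpha> \<mu>" using min_poly_over_exists[OF P] by blast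
  have "R \<subset> simple_extension R \<alpha>"
    using subset_simple_extension[OF R(1)] in_simple_extension[OF R(1)] \<open>\<alpha> \<notin> R\<close> by blast
  then have "- 1 \<in> sums_of_squares (simple_extension R \<alpha>)"
    using max is_subfield_simple_extension[OF R(1) \<mu>]
    unfolding maximal_real_subfield_def formally_real_def by blast
  then show ?thesis
    unfolding simple_extension_reduced[OF R(1) P] sums_of_squares_image[OF tc_ring_hom_poly]
    by force
qed

lemma quadratic_root_outside_subfield:
  assumes R: "is_subfield R" and F: "poly_over R F" "degree F \<le> 2"
    and y: "y ^ 2 \<in> R" "y \<notin> R" "poly F y = 0"
  shows "coeff F 0 + coeff F 2 * y ^ 2 = 0"
proof -
  have F_at: "coeff F 0 + coeff F 1 * y + coeff F 2 * y ^ 2 = 0"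
    using poly_degree_le_2[OF F(2)] y(3) by simp
  have coeffs: "coeff F i \<in> R" for i using F(1) unfolding poly_over_def by blast
  have "coeff F 1 = 0"
  proof (rule ccontr)
    assume "coeff F 1 \<noteq> 0"
    moreover have "coeff F 1 * y = - (coeff F 0 + coeff F 2 * y ^ 2)"
      using F_at by (simp add: eq_neg_iff_add_eq_0 algebra_simps)
    ultimately have "y = - (coeff F 0 + coeff F 2 * y ^ 2) / coeff F 1"
      by (simp add: eq_divide_eq mult.commute)
    also have "\<dots> \<in> R"
      using coeffs y(1) R is_subfield_divide is_subfield_uminus is_subfield_add is_subfield_mult
      by metis
    finally show False using y(2) by simp
  qed
  then show ?thesis using F_at by simp
qed

lemma maximal_real_subfield_neg_sos:
  fixes R :: "'c::alg_closed_field set"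
  assumes max: "maximal_real_subfield K R" and x: "x \<in> R" and nsq: "\<forall>b\<in>R. x \<noteq> b * b"
  shows "- x \<in> sums_of_squares R"
proof -
  note R = maximal_real_subfieldD[OF max]
  obtain y where y: "y ^ 2 = x" using nth_root_exists[of 2 x] by auto
  then have "y \<notin> R" using nsq by (auto simp: power2_eq_square)
  define P where "P = [:- x, 0, 1:]"
  have P: "poly_over R P" "P \<noteq> 0" "poly P y = 0" "degree P = 2"
    using x is_subfield_0[OF R(1)] is_subfield_1[OF R(1)] is_subfield_uminus[OF R(1)] y
    unfolding P_def poly_over_def
    by (auto simp: coeff_pCons split: nat.split simp flip: power2_eq_square)
  obtain G where G: "G \<in> sums_of_squares {h. poly_over R h \<and> degree h < 2}" "poly G y = - 1"
    using maximal_real_subfield_minus_one[OF max \<open>y \<notin> R\<close> P(1-3)] P(4) by auto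
  \<comment> \<open>1 + G is then a multiple of X^2 - x whose leading coefficient is a sum of squares\<close>
  define F where "F = 1 + G"
  note F = one_plus_sums_of_squares_poly[OF R(1,2) G(1), folded F_def]
  have "poly F y = 0" using G(2) unfolding F_def by simp
  moreover have "degree F \<le> 2" using F(3) by simp
  ultimately have "coeff F 0 + coeff F 2 * y ^ 2 = 0"
    using quadratic_root_outside_subfield[OF R(1) F(1)] x y \<open>y \<notin> R\<close> by blast
  then have c0: "coeff F 0 = - (coeff F 2 * x)" using y by (simp add: eq_neg_iff_add_eq_0)
  have "degree F = 2"
  proof (rule ccontr)
    assume "degree F \<noteq> 2"
    moreover have "even (degree F)" using F(2) unfolding sos_leading_even_def by auto
    ultimately have "degree F = 0" using \<open>degree F \<le> 2\<close> by presburger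
    then show False
      using F(2) c0 coeff_eq_0[of F 2] unfolding sos_leading_even_def
      by (metis leading_coeff_0_iff minus_zero mult_zero_left zero_less_numeral)
  qed
  then have lead: "coeff F 2 \<in> sums_of_squares R" "coeff F 2 \<noteq> 0"
    using F(2) unfolding sos_leading_even_def by (metis, metis leading_coeff_0_iff)
  have "coeff F 0 = 1 + poly G 0" unfolding F_def by (simp add: poly_0_coeff_0)
  also have "\<dots> \<in> sums_of_squares R"
    using sums_of_squares_add[OF square_in_sums_of_squares[OF is_subfield_1[OF R(1)]]
        poly_sums_of_squares_in[OF G(1), of 0 R]] poly_over_poly[OF R(1)] is_subfield_0[OF R(1)]
    by simp
  finally have "coeff F 0 * inverse (coeff F 2) \<in> sums_of_squares R"
    using sums_of_squares_mult[OF R(1) sums_of_squares_inverse[OF R(1) lead(1)]] by blast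
  then show ?thesis using c0 lead(2) by (simp add: field_simps)
qed

lemma maximal_real_subfield_square:
  fixes R :: "'c::alg_closed_field set"
  assumes max: "maximal_real_subfield K R" and x: "x \<in> R"
  shows "\<exists>b\<in>R. x = b * b \<or> - x = b * b"
proof (rule ccontr)
  assume no_root: "\<not> ?thesis"
  note R = maximal_real_subfieldD[OF max]
  have "- x \<in> sums_of_squares R" using maximal_real_subfield_neg_sos[OF max x] no_root by auto
  moreover have "x \<in> sums_of_squares R"
    using maximal_real_subfield_neg_sos[OF max is_subfield_uminus[OF R(1) x]] no_root by auto
  ultimately have "(- x) * x * (inverse x * inverse x) \<in> sums_of_squares R"
    using sums_of_squares_mult[OF R(1) square_in_sums_of_squares[OF is_subfield_inverse[OF R(1) x]]]
      sums_of_squares_mult[OF R(1)] by blast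
  moreover have "x \<noteq> 0" using no_root is_subfield_0[OF R(1)] by force
  ultimately show False using R(2) unfolding formally_real_def by (simp add: field_simps)
qed

lemma maximal_real_subfield_even_degree_min_poly:
  fixes R :: "'c::alg_closed_field set"
  assumes max: "maximal_real_subfield K R" and "\<alpha> \<notin> R" and \<mu>: "min_poly_over R \<alpha> \<mu>"
    and roots: "\<And>q. poly_over R q \<Longrightarrow> odd (degree q) \<Longrightarrow> degree q < degree \<mu> \<Longrightarrow> \<exists>x\<in>R. poly q x = 0"
  shows "even (degree \<mu>)"
proof (rule ccontr)
  assume "odd (degree \<mu>)"
  note R = maximal_real_subfieldD[OF max] and \<mu>R = min_poly_overD(1-3)[OF \<mu>]
  obtain G where G: "G \<in> sums_of_squares {h. poly_over R h \<and> degree h < degree \<mu>}" "poly G \<alpha> = - 1"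
    using maximal_real_subfield_minus_one[OF max \<open>\<alpha> \<notin> R\<close> \<mu>R] by blast
  \<comment> \<open>1 + G vanishes at \<alpha>, and its cofactor by \<mu> has odd degree below that of \<mu>\<close>
  define F where "F = 1 + G"
  note F = one_plus_sums_of_squares_poly[OF R(1,2) G(1), folded F_def]
  have "poly F \<alpha> = 0" using G(2) unfolding F_def by simp
  then have F_eq: "F = (F div \<mu>) * \<mu>" "poly_over R (F div \<mu>)"
    using min_poly_over_dvd[OF R(1) \<mu> F(1)] poly_over_div_mod(1)[OF R(1) F(1) \<mu>R(1)] by blast+
  then have q0: "F div \<mu> \<noteq> 0" using F(2) unfolding sos_leading_even_def by (metis mult_zero_left)
  have "degree F = degree (F div \<mu>) + degree \<mu>"
    using degree_mult_eq[OF q0 \<mu>R(2)] by (simp only: F_eq(1)[symmetric])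
  then have "odd (degree (F div \<mu>))" "degree (F div \<mu>) < degree \<mu>"
    using F(2,3) \<open>odd (degree \<mu>)\<close> unfolding sos_leading_even_def by (auto, arith)
  then obtain \<beta> where "\<beta> \<in> R" "poly (F div \<mu>) \<beta> = 0" using roots F_eq(2) by blast
  then have "poly G \<beta> = - 1"
    using arg_cong[OF F_eq(1), of "\<lambda>q. poly q \<beta>"] unfolding F_def by (simp add: add_eq_0_iff)
  moreover have "poly G \<beta> \<in> sums_of_squares R"
    using poly_sums_of_squares_in[OF G(1)] poly_over_poly[OF R(1)] \<open>\<beta> \<in> R\<close> by blast
  ultimately show False using R(2) unfolding formally_real_def by simp
qed

lemma maximal_real_subfield_odd_degree_root:
  fixes R :: "'c::alg_closed_field set"
  assumes max: "maximal_real_subfield K R"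
  shows "poly_over R p \<Longrightarrow> odd (degree p) \<Longrightarrow> \<exists>x\<in>R. poly p x = 0"
proof (induction "degree p" arbitrary: p rule: less_induct)
  case less
  note R = maximal_real_subfieldD[OF max]
  have "p \<noteq> 0" using less.prems(2) by auto
  obtain \<alpha> where \<alpha>: "poly p \<alpha> = 0"
    using alg_closed_imp_poly_has_root[OF odd_pos[OF less.prems(2)]] by blast
  show ?case
  proof (cases "\<alpha> \<in> R")
    case True
    then show ?thesis using \<alpha> by blast
  next
    case False
    obtain \<mu> where \<mu>: "min_poly_over R \<alpha> \<mu>"
      using min_poly_over_exists[OF less.prems(1) \<open>p \<noteq> 0\<close> \<alpha>] by blast
    note \<mu>R = min_poly_overD(1-3)[OF \<mu>]
    have p_eq: "p = (p div \<mu>) * \<mu>" "poly_over R (p div \<mu>)"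
      using min_poly_over_dvd[OF R(1) \<mu> less.prems(1) \<alpha>]
        poly_over_div_mod(1)[OF R(1) less.prems(1) \<mu>R(1)] by blast+
    then have q0: "p div \<mu> \<noteq> 0" using \<open>p \<noteq> 0\<close> by (metis mult_zero_left)
    have deg_p: "degree p = degree (p div \<mu>) + degree \<mu>"
      using degree_mult_eq[OF q0 \<mu>R(2)] by (simp only: p_eq(1)[symmetric])
    have "even (degree \<mu>)"
    proof (rule maximal_real_subfield_even_degree_min_poly[OF max False \<mu>])
      fix q assume q: "poly_over R q" "odd (degree q)" "degree q < degree \<mu>"
      then have "degree q < degree p" using deg_p by linarith
      then show "\<exists>x\<in>R. poly q x = 0" using less.hyps q(1,2) by blast
    qed
    moreover have "0 < degree \<mu>" using degree_pos_if_root[OF \<mu>R(2,3)] .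
    ultimately have "odd (degree (p div \<mu>))" "degree (p div \<mu>) < degree p"
      using deg_p less.prems(2) by simp_all
    then obtain x where "x \<in> R" "poly (p div \<mu>) x = 0" using less.hyps p_eq(2) by blast
    then show ?thesis using arg_cong[OF p_eq(1), of "\<lambda>q. poly q x"] by auto
  qed
qed

section \<open>Real closed fields as HOL-Algebra structures\<close>

definition subfield_ring :: "'c::field set \<Rightarrow> 'c ring" where
  "subfield_ring R = ring_of_type_algebra\<lparr>carrier := R\<rparr>"

lemma subfield_ring_simps [simp]:
  "carrier (subfield_ring R) = R" "monoid.mult (subfield_ring R) = (*)" "one (subfield_ring R) = 1"
  "zero (subfield_ring R) = 0" "add (subfield_ring R) = (+)"
  unfolding subfield_ring_def ring_of_type_algebra_def by auto

context
  fixes R :: "'c::field set"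
  assumes R: "is_subfield R"
begin

lemma field_subfield_ring: "field (subfield_ring R)"
proof -
  have "\<exists>y\<in>R. x + y = 0" if "x \<in> R" for x
    using is_subfield_uminus[OF R that] by (intro bexI[of _ "- x"]) simp_all
  moreover have "\<exists>y\<in>R. x * y = 1" if "x \<in> R" "x \<noteq> 0" for x
    using is_subfield_inverse[OF R that(1)] that(2) by (intro bexI[of _ "inverse x"]) simp_all
  ultimately show ?thesis
    using is_subfield_0[OF R] is_subfield_1[OF R] is_subfield_add[OF R] is_subfield_mult[OF R]
    by unfold_locales (auto simp: Units_def algebra_simps)
qed

interpretation subfield_ring: field "subfield_ring R"
  by (rule field_subfield_ring)

lemma finsum_subfield_ring:
  "finite A \<Longrightarrow> f ` A \<subseteq> R \<Longrightarrow> finsum (subfield_ring R) f A = sum f A"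
proof (induction A rule: finite_induct)
  case (insert a A)
  then have "finsum (subfield_ring R) f (insert a A) = f a + finsum (subfield_ring R) f A"
    using subfield_ring.finsum_insert[of A a f] by (simp add: Pi_iff image_subset_iff)
  then show ?case using insert by simp
qed simp

lemma a_inv_subfield_ring: "x \<in> R \<Longrightarrow> \<ominus>\<^bsub>subfield_ring R\<^esub> x = - x"
  using subfield_ring.minus_equality[of "- x" x] is_subfield_uminus[OF R] by simp

lemma nat_pow_subfield_ring: "x [^]\<^bsub>subfield_ring R\<^esub> (n::nat) = x ^ n"
  by (induction n) (simp_all add: nat_pow_def)

lemma real_closed_field_subfield_ring:
  assumes real: "formally_real R"
    and square: "\<And>x. x \<in> R \<Longrightarrow> \<exists>b\<in>R. x = b * b \<or> - x = b * b"
    and odd_root: "\<And>p. poly_over R p \<Longrightarrow> odd (degree p) \<Longrightarrow> \<exists>x\<in>R. poly p x = 0"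
  shows "real_closed_field (subfield_ring R)"
  unfolding real_closed_field_def real_field_def
proof (intro conjI ballI allI impI notI)
  show "field (subfield_ring R)" by (rule field_subfield_ring)
next
  assume "\<exists>(n::nat) f. f ` {..<n} \<subseteq> carrier (subfield_ring R) \<and>
    finsum (subfield_ring R) (\<lambda>i. f i \<otimes>\<^bsub>subfield_ring R\<^esub> f i) {..<n} =
      \<ominus>\<^bsub>subfield_ring R\<^esub> \<one>\<^bsub>subfield_ring R\<^esub>"
  then obtain n :: nat and f where f: "f ` {..<n} \<subseteq> R"
    and "finsum (subfield_ring R) (\<lambda>i. f i * f i) {..<n} = \<ominus>\<^bsub>subfield_ring R\<^esub> 1" by auto
  moreover have "(\<lambda>i. f i * f i) ` {..<n} \<subseteq> R" using f is_subfield_mult[OF R] by auto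
  ultimately have "(\<Sum>i<n. f i * f i) = - 1"
    using finsum_subfield_ring[of "{..<n}" "\<lambda>i. f i * f i"]
      a_inv_subfield_ring[OF is_subfield_1[OF R]] by simp
  then show False
    using real sum_squares_in_sums_of_squares[of n f R] f unfolding formally_real_def by auto
next
  fix x assume "x \<in> carrier (subfield_ring R)"
  then show "\<exists>b\<in>carrier (subfield_ring R).
      x = b \<otimes>\<^bsub>subfield_ring R\<^esub> b \<or> \<ominus>\<^bsub>subfield_ring R\<^esub> x = b \<otimes>\<^bsub>subfield_ring R\<^esub> b"
    using square a_inv_subfield_ring by simp
next
  fix n :: nat and c
  assume n: "odd n" and c: "c ` {..n} \<subseteq> carrier (subfield_ring R)" "c n \<noteq> \<zero>\<^bsub>subfield_ring R\<^esub>"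
  define p where "p = (\<Sum>i\<le>n. monom (c i) i)"
  have coeff_p: "coeff p k = (if k \<le> n then c k else 0)" for k
    unfolding p_def by (simp add: coeff_sum coeff_monom)
  have "poly_over R p" using c(1) is_subfield_0[OF R] unfolding poly_over_def coeff_p by auto
  moreover have "degree p = n"
    using c(2) by (intro antisym degree_le le_degree) (simp_all add: coeff_p)
  ultimately obtain x where x: "x \<in> R" "poly p x = 0" using odd_root n by blast
  have "finsum (subfield_ring R) (\<lambda>i. c i \<otimes>\<^bsub>subfield_ring R\<^esub> x [^]\<^bsub>subfield_ring R\<^esub> i) {..n}
      = poly p x"
    using c(1) x(1) finsum_subfield_ring[of "{..n}"] is_subfield_mult[OF R] is_subfield_power[OF R]
    by (auto simp: p_def poly_sum poly_monom nat_pow_subfield_ring image_subset_iff)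
  then show "\<exists>x\<in>carrier (subfield_ring R).
      finsum (subfield_ring R) (\<lambda>i. c i \<otimes>\<^bsub>subfield_ring R\<^esub> x [^]\<^bsub>subfield_ring R\<^esub> i) {..n} =
        \<zero>\<^bsub>subfield_ring R\<^esub>"
    using x by auto
qed

lemma ring_hom_into_comp:
  assumes "h \<in> ring_hom (subfield_ring R) T" "tc_ring_hom f" "range f \<subseteq> R"
  shows "ring_hom_into (h \<circ> f) T"
  using assms is_subfield_add[OF R] is_subfield_mult[OF R]
  unfolding ring_hom_into_def tc_ring_hom_def ring_hom_def by (auto simp: image_subset_iff)

end

lemma (in ring_hom_cring) hom_finsum_mult:
  assumes "f ` A \<subseteq> carrier R" "g ` A \<subseteq> carrier R"
  shows "h (\<Oplus>i\<in>A. f i \<otimes> g i) = (\<Oplus>\<^bsub>S\<^esub>i\<in>A. h (f i) \<otimes>\<^bsub>S\<^esub> h (g i))"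
  using assms by (subst hom_finsum) (auto intro!: S.finsum_cong' simp: image_subset_iff)

lemma real_closed_field_ring_iso:
  assumes S: "real_closed_field S" and T: "field T" and h: "h \<in> ring_iso S T"
  shows "real_closed_field T"
proof -
  interpret S: field S using S unfolding real_closed_field_def real_field_def by blast
  interpret T: field T by (rule T)
  define k where "k = inv_into (carrier S) h"
  have k: "k \<in> ring_iso T S" unfolding k_def using ring_iso_set_sym[OF S.ring_axioms h] .
  interpret k: ring_hom_cring T S k
    using k T.is_cring S.is_cring
    by (simp add: ring_hom_cring_def ring_hom_cring_axioms_def ring_iso_def)
  have bij: "bij_betw k (carrier T) (carrier S)" using k by (simp add: ring_iso_def)
  have k_inj: "x = y" if "x \<in> carrier T" "y \<in> carrier T" "k x = k y" for x y
    using bij that by (metis bij_betw_inv_into_left)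
  have k_surj: "\<exists>x\<in>carrier T. z = k x" if "z \<in> carrier S" for z
    using bij that by (metis bij_betw_imp_surj_on imageE)
  show ?thesis
    unfolding real_closed_field_def real_field_def
  proof (intro conjI ballI allI impI notI)
    show "field T" by (rule T)
  next
    assume "\<exists>(n::nat) f. f ` {..<n} \<subseteq> carrier T \<and>
      (\<Oplus>\<^bsub>T\<^esub>i\<in>{..<n}. f i \<otimes>\<^bsub>T\<^esub> f i) = \<ominus>\<^bsub>T\<^esub> \<one>\<^bsub>T\<^esub>"
    then obtain n :: nat and f where f: "f ` {..<n} \<subseteq> carrier T"
      "(\<Oplus>\<^bsub>T\<^esub>i\<in>{..<n}. f i \<otimes>\<^bsub>T\<^esub> f i) = \<ominus>\<^bsub>T\<^esub> \<one>\<^bsub>T\<^esub>" by blast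
    then have "(k \<circ> f) ` {..<n} \<subseteq> carrier S"
      "(\<Oplus>\<^bsub>S\<^esub>i\<in>{..<n}. (k \<circ> f) i \<otimes>\<^bsub>S\<^esub> (k \<circ> f) i) = \<ominus>\<^bsub>S\<^esub> \<one>\<^bsub>S\<^esub>"
      using k.hom_finsum_mult[OF f(1) f(1)] by auto
    then show False using S unfolding real_closed_field_def real_field_def by blast
  next
    fix a assume a: "a \<in> carrier T"
    then obtain b where b: "b \<in> carrier S" "k a = b \<otimes>\<^bsub>S\<^esub> b \<or> \<ominus>\<^bsub>S\<^esub> k a = b \<otimes>\<^bsub>S\<^esub> b"
      using S unfolding real_closed_field_def by (meson k.hom_closed)
    obtain c where c: "c \<in> carrier T" "b = k c" using k_surj[OF b(1)] by blast
    then have "a = c \<otimes>\<^bsub>T\<^esub> c \<or> \<ominus>\<^bsub>T\<^esub> a = c \<otimes>\<^bsub>T\<^esub> c"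
      using b(2) a k_inj by auto
    then show "\<exists>c\<in>carrier T. a = c \<otimes>\<^bsub>T\<^esub> c \<or> \<ominus>\<^bsub>T\<^esub> a = c \<otimes>\<^bsub>T\<^esub> c" using c(1) by blast
  next
    fix n :: nat and c assume n: "odd n" and c: "c ` {..n} \<subseteq> carrier T" "c n \<noteq> \<zero>\<^bsub>T\<^esub>"
    have "(k \<circ> c) ` {..n} \<subseteq> carrier S" using c(1) by auto
    moreover have "(k \<circ> c) n \<noteq> \<zero>\<^bsub>S\<^esub>" using c k_inj[of "c n" "\<zero>\<^bsub>T\<^esub>"] by auto
    ultimately obtain z where z: "z \<in> carrier S"
      "(\<Oplus>\<^bsub>S\<^esub>i\<in>{..n}. (k \<circ> c) i \<otimes>\<^bsub>S\<^esub> z [^]\<^bsub>S\<^esub> i) = \<zero>\<^bsub>S\<^esub>"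
      using S n unfolding real_closed_field_def by blast
    obtain x where x: "x \<in> carrier T" "z = k x" using k_surj[OF z(1)] by blast
    have "k (\<Oplus>\<^bsub>T\<^esub>i\<in>{..n}. c i \<otimes>\<^bsub>T\<^esub> x [^]\<^bsub>T\<^esub> i) = k \<zero>\<^bsub>T\<^esub>"
      using k.hom_finsum_mult[of c "{..n}" "\<lambda>i. x [^]\<^bsub>T\<^esub> i"] c(1) x z(2) by (auto simp: k.ring.hom_nat_pow)
    moreover have "(\<Oplus>\<^bsub>T\<^esub>i\<in>{..n}. c i \<otimes>\<^bsub>T\<^esub> x [^]\<^bsub>T\<^esub> i) \<in> carrier T"
      using c(1) x(1) by (intro T.finsum_closed) (auto simp: image_subset_iff)
    ultimately show "\<exists>x\<in>carrier T. (\<Oplus>\<^bsub>T\<^esub>i\<in>{..n}. c i \<otimes>\<^bsub>T\<^esub> x [^]\<^bsub>T\<^esub> i) = \<zero>\<^bsub>T\<^esub>"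
      using k_inj[OF _ T.zero_closed] x(1) by blast
  qed
qed

section \<open>Cardinality of the algebraic closure\<close>

context includes cardinal_syntax
begin

lemma card_of_finite_le_infinite: "finite A \<Longrightarrow> \<not> finite B \<Longrightarrow> |A| \<le>o |B|"
  using finite_ordLess_infinite[of "|A|" "|B|"] card_of_Well_order Field_card_of ordLess_imp_ordLeq
  by metis

lemma card_of_lists_length_le:
  assumes inf: "\<not> finite B" and le: "|UNIV :: 'a set| \<le>o |B|"
  shows "|{xs :: 'a list. length xs = n}| \<le>o |B|"
proof (induction n)
  case 0
  have "{xs :: 'a list. length xs = 0} = {[]}" by auto
  then show ?case using card_of_finite_le_infinite[OF _ inf, of "{[] :: 'a list}"] by simp
next
  case (Suc n)
  have eq: "{xs :: 'a list. length xs = Suc n} =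
      (\<lambda>(x, xs). x # xs) ` ((UNIV :: 'a set) \<times> {xs. length xs = n})"
    by (auto simp: length_Suc_conv)
  have "|(UNIV :: 'a set) \<times> {xs :: 'a list. length xs = n}| \<le>o |B|"
    using card_of_Sigma_ordLeq_infinite[OF inf le, of "\<lambda>_. {xs :: 'a list. length xs = n}"] Suc
    by simp
  then show ?case unfolding eq using card_of_image ordLeq_transitive by blast
qed

lemma card_of_lists_le:
  assumes inf: "\<not> finite B" and le: "|UNIV :: 'a set| \<le>o |B|"
  shows "|UNIV :: 'a list set| \<le>o |B|"
proof -
  have "(UNIV :: 'a list set) = (\<Union>n. {xs. length xs = n})" by auto
  moreover have "|\<Union>n. {xs :: 'a list. length xs = n}| \<le>o |B|"
    using card_of_UNION_ordLeq_infinite[OF inf infinite_iff_card_of_nat[THEN iffD1, OF inf],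
        of "\<lambda>n. {xs :: 'a list. length xs = n}"] card_of_lists_length_le[OF inf le] by blast
  ultimately show ?thesis by simp
qed

lemma card_of_poly_le:
  assumes inf: "\<not> finite B" and le: "|UNIV :: 'a::zero set| \<le>o |B|"
  shows "|UNIV :: 'a poly set| \<le>o |B|"
proof -
  have "(UNIV :: 'a poly set) = Poly ` UNIV" by (metis Poly_coeffs surj_def)
  then show ?thesis
    using ordLeq_transitive[OF card_of_image[of Poly] card_of_lists_le[OF inf le]] by simp
qed

lemma card_of_fract_le:
  assumes inf: "\<not> finite (UNIV :: 'a::idom set)"
  shows "|UNIV :: 'a fract set| \<le>o |UNIV :: 'a set|"
proof -
  have "(UNIV :: 'a fract set) = (\<lambda>(a, b). Fract a b) ` (UNIV \<times> UNIV)"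
    by (auto simp: image_iff) (metis Fract_cases)
  then have "|UNIV :: 'a fract set| \<le>o |(UNIV :: 'a set) \<times> (UNIV :: 'a set)|"
    using card_of_image[of "\<lambda>(a, b). Fract a b" "UNIV :: ('a \<times> 'a) set"] by simp
  then show ?thesis
    using ordLeq_ordIso_trans card_of_Times_same_infinite[OF inf] by blast
qed

lemma card_of_alg_closure_le:
  assumes inf: "\<not> finite B" and le: "|UNIV :: 'k::field set| \<le>o |B|"
  shows "|UNIV :: 'k alg_closure set| \<le>o |B|"
proof -
  define Z where "Z p = {x :: 'k alg_closure. poly (map_poly to_ac p) x = 0}" for p
  have "(UNIV :: 'k alg_closure set) \<subseteq> (\<Union>p\<in>{p. p \<noteq> 0}. Z p)"
    unfolding Z_def using alg_closure_algebraic by blast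
  moreover have "|\<Union>p\<in>{p :: 'k poly. p \<noteq> 0}. Z p| \<le>o |B|"
  proof (rule card_of_UNION_ordLeq_infinite[OF inf])
    show "|{p :: 'k poly. p \<noteq> 0}| \<le>o |B|"
      using ordLeq_transitive[OF card_of_mono1 card_of_poly_le[OF inf le]] by blast
    have "finite (Z p)" if "p \<noteq> 0" for p
      unfolding Z_def using that poly_roots_finite[of "map_poly to_ac p"]
      by (simp add: map_poly_eq_0_iff)
    then show "\<forall>p\<in>{p. p \<noteq> 0}. |Z p| \<le>o |B|" using card_of_finite_le_infinite[OF _ inf] by blast
  qed
  ultimately show ?thesis using ordLeq_transitive card_of_mono1 by blast
qed

end

section \<open>Real closures of the fraction field\<close>

lemma is_subfield_range_to_ac: "is_subfield (range (to_ac :: 'k::field \<Rightarrow> 'k alg_closure))"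
  unfolding is_subfield_def
  by (auto simp flip: to_ac_0 to_ac_1 to_ac_add to_ac_mult to_ac_minus to_ac_inverse)

lemma tc_ring_hom_to_ac_Fract: "tc_ring_hom (\<lambda>a::'a::idom. to_ac (Fract a 1))"
  by (simp add: tc_ring_hom_def One_fract_def add_fract mult_fract flip: to_ac_add to_ac_mult)

lemma inj_to_ac_Fract: "inj (\<lambda>a::'a::idom. to_ac (Fract a 1))"
  by (simp add: inj_def eq_fract)

lemma real_closed_field_image_ring:
  assumes R: "is_subfield R" and real_closed: "real_closed_field (subfield_ring R)" and "inj g"
  shows "real_closed_field (image_ring g (subfield_ring R))"
    and "g \<in> ring_hom (subfield_ring R) (image_ring g (subfield_ring R))"
proof -
  have inj_R: "inj_on g (carrier (subfield_ring R))" using \<open>inj g\<close> inj_on_subset by fastforce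
  note iso = inj_imp_image_ring_iso[OF inj_R]
  show "real_closed_field (image_ring g (subfield_ring R))"
    using real_closed_field_ring_iso[OF real_closed _ iso]
      field.inj_imp_image_ring_is_field[OF field_subfield_ring[OF R] inj_R] by blast
  show "g \<in> ring_hom (subfield_ring R) (image_ring g (subfield_ring R))"
    using iso by (simp add: ring_iso_def)
qed

lemma real_closed_field_embedding:
  assumes inf: "\<not> finite (UNIV :: 'a::idom set)" and "real_field_type TYPE('a fract)"
  shows "\<exists>(T :: 'a ring) (\<phi> :: 'a \<Rightarrow> 'a). real_closed_field T \<and> ring_hom_into \<phi> T \<and> inj \<phi>"
proof -
  define K where "K = range (to_ac :: 'a fract \<Rightarrow> 'a fract alg_closure)"
  have "is_subfield K" "formally_real K"
    unfolding K_def using is_subfield_range_to_ac inj_to_ac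
      formally_real_range[of to_ac, OF _ _ formally_real_UNIV[OF assms(2)]]
    by (simp_all add: tc_ring_hom_def)
  then obtain R where max: "maximal_real_subfield K R" using maximal_real_subfield_exists by blast
  note R = maximal_real_subfieldD[OF max]
  have "real_closed_field (subfield_ring R)"
    by (rule real_closed_field_subfield_ring[OF R(1,2) maximal_real_subfield_square[OF max]
          maximal_real_subfield_odd_degree_root[OF max]])
  moreover obtain g :: "'a fract alg_closure \<Rightarrow> 'a" where "inj g"
    using card_of_ordLeq[THEN iffD2, OF card_of_alg_closure_le[OF inf card_of_fract_le[OF inf]]]
    by blast
  ultimately have T: "real_closed_field (image_ring g (subfield_ring R))"
    "g \<in> ring_hom (subfield_ring R) (image_ring g (subfield_ring R))"
    using real_closed_field_image_ring[OF R(1)] by blast+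
  have "range (\<lambda>a. to_ac (Fract a 1)) \<subseteq> R" using R(3) unfolding K_def by auto
  then have "ring_hom_into (g \<circ> (\<lambda>a. to_ac (Fract a 1))) (image_ring g (subfield_ring R))"
    using ring_hom_into_comp[OF R(1) T(2) tc_ring_hom_to_ac_Fract] by blast
  moreover have "inj (g \<circ> (\<lambda>a. to_ac (Fract a 1)))"
    using \<open>inj g\<close> inj_to_ac_Fract by (rule inj_compose)
  ultimately show ?thesis using T(1) by blast
qed

theorem proposition2p2:
  fixes \<iota> :: "'a::{real_algebra_1, idom} \<Rightarrow> 'b::comm_ring_1"
  assumes "real_field_type TYPE('a fract)"
    and "tc_ring_hom \<iota>"
    and "substitution_property TYPE('a) \<iota>"
  shows "inj \<iota>"
proof -
  obtain T :: "'a ring" and \<phi> :: "'a \<Rightarrow> 'a" where "real_closed_field T" "ring_hom_into \<phi> T" "inj \<phi>"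
    using real_closed_field_embedding[OF infinite_UNIV_char_0 assms(1)] by blast
  then obtain \<psi> :: "'b \<Rightarrow> 'a" where "\<psi> \<circ> \<iota> = \<phi>"
    using assms(3) unfolding substitution_property_def by blast
  \<comment> \<open>only the existence part of the substitution property is used, and not that \<iota> is a homomorphism\<close>
  with \<open>inj \<phi>\<close> have "inj (\<psi> \<circ> \<iota>)" by simp
  then show "inj \<iota>" by (rule inj_on_imageI2)
qed

end
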